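(* For all $z\in\mathbb{R}$, $$\chi_1(z)=\sqrt{\pi}\,\varphi_1(z)+\psi_1(z),\qquad \chi_2(z)=\sqrt{\pi}\,\bigl[\varphi_2(z)-\ln 2\;\varphi_1(z)\bigr]+\psi_2(z),$$ where $\varphi_1,\varphi_2$ are odd and $\psi_1,\psi_2$ are even functions.
   Context: Define $\chi_0(z)=1$ and, for $i\ge1$, $\chi_i(z)=2\int_0^z dy\,e^{y^2}\int_{-\infty}^y du\,e^{-u^2}\chi_{i-1}(u)$, $z\in\mathbb{R}$. Define $\varphi_1(x)=\int_0^x e^{t^2}dt$; $\psi_1(x)=2\int_0^x dt\,e^{t^2}\int_0^t du\,e^{-u^2}$; $\varphi_2(x)=2\int_0^x dt_2\,e^{t_2^2}\int_0^{t_2}du_2\,e^{-u_2^2}\int_0^{u_2}dt_1\,e^{t_1^2}$; $\psi_2(x)=4\int_0^x dt_2\,e^{t_2^2}\int_0^{t_2}du_2\,e^{-u_2^2}\int_0^{u_2}dt_1\,e^{t_1^2}\int_0^{t_1}du_1\,e^{-u_1^2}$. *)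

theory Defs
  imports "HOL-Analysis.Analysis"
begin

text \<open>Oriented integral from a to b (Henstock-Kurzweil), so that
  the integral from 0 to z is meaningful also for negative z.\<close>
definition oint :: "real \<Rightarrow> real \<Rightarrow> (real \<Rightarrow> real) \<Rightarrow> real" where
  "oint a b f = (if a \<le> b then integral {a..b} f else - integral {b..a} f)"

primrec chi :: "nat \<Rightarrow> real \<Rightarrow> real" where
  "chi 0 z = 1"
| "chi (Suc i) z =
     2 * oint 0 z (\<lambda>y. exp (y^2) * integral {..y} (\<lambda>u. exp (-(u^2)) * chi i u))"

definition phi1 :: "real \<Rightarrow> real" where
  "phi1 x = oint 0 x (\<lambda>t. exp (t^2))"

definition psi1 :: "real \<Rightarrow> real" where
  "psi1 x = 2 * oint 0 x (\<lambda>t. exp (t^2) * oint 0 t (\<lambda>u. exp (-(u^2))))"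

definition phi2 :: "real \<Rightarrow> real" where
  "phi2 x = 2 * oint 0 x (\<lambda>t2. exp (t2^2) * oint 0 t2 (\<lambda>u2. exp (-(u2^2)) *
              oint 0 u2 (\<lambda>t1. exp (t1^2))))"

definition psi2 :: "real \<Rightarrow> real" where
  "psi2 x = 4 * oint 0 x (\<lambda>t2. exp (t2^2) * oint 0 t2 (\<lambda>u2. exp (-(u2^2)) *
              oint 0 u2 (\<lambda>t1. exp (t1^2) * oint 0 t1 (\<lambda>u1. exp (-(u1^2))))))"

end

theory Submission
  imports Defs "HOL-Probability.Probability" "HOL-Real_Asymp.Real_Asymp"
begin

text \<open>
  With E(x) = int_0^x e^{-u^2} du one has int_{-infty}^y e^{-u^2} du = sqrt pi / 2 + E(y), and
  integrating e^{y^2} times this gives chi_1 = sqrt pi phi_1 + psi_1.  For chi_2 one needs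
  int_{-infty}^y e^{-u^2} chi_1(u) du = K(y) - L, where K = sqrt pi Q + R with
  Q = int_0 e^{-u^2} phi_1 (even) and R = int_0 e^{-u^2} psi_1 (odd), and L = lim K at -infty =
  lim (sqrt pi Q - R) at +infty.  Integrating by parts against the Gaussian tail
  M = sqrt pi / 2 - E turns sqrt pi Q - R into 4 int_0^v e^{-u^2} Q(u) du plus terms that vanish
  by the bound M(v) <= e^{-v^2} / (2 v).  Substituting t = s u in Q and swapping the order of
  integration evaluates the remaining integral at infinity as
  (sqrt pi / 2) int_0^1 s / (2 (1 + s^2)) ds = sqrt pi ln 2 / 8, whence L = sqrt pi ln 2 / 2.
  The parity statements follow from the parity of the integrands.
\<close>

lemma oint_of_nonneg: "0 \<le> x \<Longrightarrow> oint 0 x f = integral {0..x} f"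
  by (simp add: oint_def)

lemma oint_of_nonpos: "x \<le> 0 \<Longrightarrow> oint 0 x f = - integral {x..0} f"
  by (cases "x = 0") (auto simp: oint_def)

lemma oint_0_0 [simp]: "oint 0 0 f = 0"
  by (simp add: oint_def)

lemma oint_cmult: "oint 0 x (\<lambda>t. c * f t) = c * oint 0 x f"
  by (simp add: oint_def)

lemma oint_eq_integral_diff:
  assumes f: "continuous_on UNIV f" and "a \<le> 0" "a \<le> x"
  shows "oint 0 x f = integral {a..x} f - integral {a..0} f"
proof (cases "0 \<le> x")
  case True
  have "integral {a..0} f + integral {0..x} f = integral {a..x} f"
    using assms True
    by (intro Henstock_Kurzweil_Integration.integral_combine integrable_continuous_real
        continuous_on_subset[OF f]) auto
  then show ?thesis using True by (simp add: oint_of_nonneg)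
next
  case False
  have "integral {a..x} f + integral {x..0} f = integral {a..0} f"
    using assms False
    by (intro Henstock_Kurzweil_Integration.integral_combine integrable_continuous_real
        continuous_on_subset[OF f]) auto
  then show ?thesis using False by (simp add: oint_of_nonpos)
qed

lemma has_real_derivative_oint:
  assumes f: "continuous_on UNIV f"
  shows "((\<lambda>x. oint 0 x f) has_real_derivative f x) (at x within S)"
proof -
  define a where "a = min 0 x - 1"
  have "((\<lambda>t. integral {a..t} f) has_real_derivative f x) (at x within {a..x + 1})"
    using f by (intro integral_has_real_derivative continuous_on_subset[OF f]) (auto simp: a_def)
  then have "((\<lambda>t. integral {a..t} f - integral {a..0} f) has_real_derivative f x) (at x)"
    by (auto simp: at_within_Icc_at a_def intro!: derivative_eq_intros)
  then have "((\<lambda>x. oint 0 x f) has_real_derivative f x) (at x)"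
    by (rule has_field_derivative_transform_within_open[where S="{a<..}"])
       (auto simp: a_def intro!: oint_eq_integral_diff[OF f, symmetric])
  then show ?thesis
    by (rule has_field_derivative_at_within)
qed

lemma continuous_on_oint:
  "continuous_on UNIV f \<Longrightarrow> continuous_on S (\<lambda>x. oint 0 x f)"
  by (rule DERIV_continuous_on[OF has_real_derivative_oint])

lemma oint_eq_antiderivative_diff:
  assumes "continuous_on UNIV f" and "\<And>x. (F has_real_derivative f x) (at x)"
  shows "oint 0 x f = F x - F 0"
proof -
  have "\<forall>x. ((\<lambda>x. oint 0 x f - F x) has_real_derivative 0) (at x)"
    using has_real_derivative_oint[OF assms(1)] assms(2) by (auto intro!: derivative_eq_intros)
  then have "oint 0 x f - F x = oint 0 0 f - F 0"
    by (rule DERIV_isconst_all)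
  then show ?thesis by simp
qed

lemma oint_minus_of_even:
  assumes "continuous_on UNIV f" and "\<And>x. f (-x) = f x"
  shows "oint 0 (-x) f = - oint 0 x f"
proof -
  have "\<forall>x. ((\<lambda>x. oint 0 (-x) f + oint 0 x f) has_real_derivative 0) (at x)"
    using assms by (auto intro!: derivative_eq_intros has_real_derivative_oint[THEN DERIV_chain2])
  then have "oint 0 (-x) f + oint 0 x f = oint 0 (-0) f + oint 0 0 f"
    by (rule DERIV_isconst_all)
  then show ?thesis by simp
qed

lemma oint_minus_of_odd:
  assumes "continuous_on UNIV f" and "\<And>x. f (-x) = - f x"
  shows "oint 0 (-x) f = oint 0 x f"
proof -
  have "\<forall>x. ((\<lambda>x. oint 0 (-x) f - oint 0 x f) has_real_derivative 0) (at x)"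
    using assms by (auto intro!: derivative_eq_intros has_real_derivative_oint[THEN DERIV_chain2])
  then have "oint 0 (-x) f - oint 0 x f = oint 0 (-0) f - oint 0 0 f"
    by (rule DERIV_isconst_all)
  then show ?thesis by simp
qed

lemma oint_bounds:
  assumes "continuous_on UNIV f" "0 \<le> x"
    and "\<And>t. 0 \<le> t \<Longrightarrow> t \<le> x \<Longrightarrow> a \<le> f t \<and> f t \<le> b"
  shows "a * x \<le> oint 0 x f" "oint 0 x f \<le> b * x"
proof -
  have int: "f integrable_on {0..x}"
    by (intro integrable_continuous_real continuous_on_subset[OF assms(1)]) simp
  show "a * x \<le> oint 0 x f"
    using integral_le[OF integrable_const_ivl int, of a] assms(2,3)
    by (simp add: oint_of_nonneg mult.commute)
  show "oint 0 x f \<le> b * x"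
    using integral_le[OF int integrable_const_ivl, of b] assms(2,3)
    by (simp add: oint_of_nonneg mult.commute)
qed

lemma nonneg_has_integral_atMost:
  fixes f F :: "real \<Rightarrow> real"
  assumes F: "\<And>x. (F has_real_derivative f x) (at x)" and f: "continuous_on UNIV f"
    and nonneg: "\<And>x. x < y \<Longrightarrow> 0 \<le> f x"
    and lim: "(F \<longlongrightarrow> 0) at_bot"
  shows "(f has_integral F y) {..y}"
proof -
  have "(F \<longlongrightarrow> F y) (at_left y)"
    using DERIV_isCont[OF F] unfolding isCont_def by (metis filterlim_at_split)
  moreover have "\<And>x. isCont f x"
    using f by (simp add: continuous_on_eq_continuous_at)
  ultimately have integrable: "set_integrable lborel {..<y} f"
    and "(LBINT x=-\<infinity>..ereal y. f x) = F y - 0"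
    using interval_integral_FTC_nonneg[of "-\<infinity>" "ereal y" F f 0 "F y"] F lim
    by (auto simp: ereal_tendsto_simps1 intro!: AE_I2 nonneg)
  then have "set_lebesgue_integral lborel {..<y} f = F y"
    by (simp add: interval_lebesgue_integral_def)
  then have "(f has_integral F y) {..<y}"
    using set_borel_integral_eq_integral[OF integrable] by (metis has_integral_integral)
  then show ?thesis
    by (subst has_integral_spike_set_eq[where T="{..<y}"])
       (auto intro: negligible_subset[of "{y}"])
qed

lemma has_integral_atMost_extend:
  fixes f F :: "real \<Rightarrow> real"
  assumes "(f has_integral I) {..a}" and "\<And>x. (F has_real_derivative f x) (at x)"
    and "a \<le> y"
  shows "(f has_integral (I + (F y - F a))) {..y}"
proof -
  have "(f has_integral (F y - F a)) {a..y}"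
    using assms(2,3) by (intro fundamental_theorem_of_calculus)
      (auto simp: has_real_derivative_iff_has_vector_derivative[symmetric] intro: DERIV_subset)
  with assms(1) have "(f has_integral (I + (F y - F a))) ({..a} \<union> {a..y})"
    by (rule has_integral_Un) (auto intro: negligible_subset[of "{a}"])
  moreover have "{..a} \<union> {a..y} = {..y}"
    using assms(3) by auto
  ultimately show ?thesis
    by simp
qed

definition expsq_oint :: "(real \<Rightarrow> real) \<Rightarrow> real \<Rightarrow> real" where
  "expsq_oint f x = oint 0 x (\<lambda>t. exp (t^2) * f t)"

definition gauss_oint :: "(real \<Rightarrow> real) \<Rightarrow> real \<Rightarrow> real" where
  "gauss_oint f x = oint 0 x (\<lambda>u. exp (-(u^2)) * f u)"

lemma expsq_oint_0 [simp]: "expsq_oint f 0 = 0"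
  by (simp add: expsq_oint_def)

lemma gauss_oint_0 [simp]: "gauss_oint f 0 = 0"
  by (simp add: gauss_oint_def)

lemma has_real_derivative_expsq_oint [derivative_intros]:
  "continuous_on UNIV f \<Longrightarrow>
    (expsq_oint f has_real_derivative exp (x^2) * f x) (at x within S)"
  unfolding expsq_oint_def [abs_def] by (intro has_real_derivative_oint continuous_intros)

lemma has_real_derivative_gauss_oint [derivative_intros]:
  "continuous_on UNIV f \<Longrightarrow>
    (gauss_oint f has_real_derivative exp (-(x^2)) * f x) (at x within S)"
  unfolding gauss_oint_def [abs_def] by (intro has_real_derivative_oint continuous_intros)

lemma continuous_on_expsq_oint [continuous_intros]:
  "continuous_on UNIV f \<Longrightarrow> continuous_on S (expsq_oint f)"
  unfolding expsq_oint_def [abs_def] by (intro continuous_on_oint continuous_intros)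

lemma continuous_on_gauss_oint [continuous_intros]:
  "continuous_on UNIV f \<Longrightarrow> continuous_on S (gauss_oint f)"
  unfolding gauss_oint_def [abs_def] by (intro continuous_on_oint continuous_intros)

lemma expsq_oint_minus_of_even:
  "continuous_on UNIV f \<Longrightarrow> (\<And>x. f (-x) = f x) \<Longrightarrow>
    expsq_oint f (-x) = - expsq_oint f x"
  unfolding expsq_oint_def by (rule oint_minus_of_even) (auto intro!: continuous_intros)

lemma expsq_oint_minus_of_odd:
  "continuous_on UNIV f \<Longrightarrow> (\<And>x. f (-x) = - f x) \<Longrightarrow>
    expsq_oint f (-x) = expsq_oint f x"
  unfolding expsq_oint_def by (rule oint_minus_of_odd) (auto intro!: continuous_intros)

lemma gauss_oint_minus_of_even:
  "continuous_on UNIV f \<Longrightarrow> (\<And>x. f (-x) = f x) \<Longrightarrow>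
    gauss_oint f (-x) = - gauss_oint f x"
  unfolding gauss_oint_def by (rule oint_minus_of_even) (auto intro!: continuous_intros)

lemma gauss_oint_minus_of_odd:
  "continuous_on UNIV f \<Longrightarrow> (\<And>x. f (-x) = - f x) \<Longrightarrow>
    gauss_oint f (-x) = gauss_oint f x"
  unfolding gauss_oint_def by (rule oint_minus_of_odd) (auto intro!: continuous_intros)

definition gauss_area :: "real \<Rightarrow> real" where
  "gauss_area x = oint 0 x (\<lambda>u. exp (-(u^2)))"

lemma gauss_area_0 [simp]: "gauss_area 0 = 0"
  by (simp add: gauss_area_def)

lemma has_real_derivative_gauss_area [derivative_intros]:
  "(gauss_area has_real_derivative exp (-(x^2))) (at x within S)"
  unfolding gauss_area_def [abs_def] by (intro has_real_derivative_oint continuous_intros)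

lemma continuous_on_gauss_area [continuous_intros]: "continuous_on S gauss_area"
  unfolding gauss_area_def [abs_def] by (intro continuous_on_oint continuous_intros)

lemma gauss_area_minus: "gauss_area (-x) = - gauss_area x"
  unfolding gauss_area_def by (rule oint_minus_of_even) (auto intro!: continuous_intros)

lemma tendsto_gauss_area_at_top: "(gauss_area \<longlongrightarrow> sqrt pi / 2) at_top"
proof -
  let ?g = "\<lambda>x::real. exp (- x\<^sup>2)"
  have gauss: "has_bochner_integral lborel (\<lambda>x. indicator {0..} x *\<^sub>R ?g x) (sqrt pi / 2)"
    by (rule gaussian_moment_0)
  then have integrable: "set_integrable lborel {0..} ?g"
    by (auto simp: set_integrable_def intro: integrable.intros)
  have half_line: "set_lebesgue_integral lborel {0..} ?g = sqrt pi / 2"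
    using gauss by (simp add: set_lebesgue_integral_def has_bochner_integral_integral_eq)
  have "((\<lambda>b. set_lebesgue_integral lborel {0..b} ?g) \<longlongrightarrow> sqrt pi / 2) at_top"
    using tendsto_set_lebesgue_integral_at_top[OF _ integrable] unfolding half_line by simp
  moreover have "\<forall>\<^sub>F b in at_top. set_lebesgue_integral lborel {0..b} ?g = gauss_area b"
  proof (rule eventually_mono[OF eventually_ge_at_top[of 0]])
    fix b :: real assume "0 \<le> b"
    moreover have "set_integrable lborel {0..b} ?g"
      by (intro borel_integrable_atLeastAtMost' continuous_intros)
    ultimately show "set_lebesgue_integral lborel {0..b} ?g = gauss_area b"
      using set_borel_integral_eq_integral(2) by (simp add: gauss_area_def oint_of_nonneg)
  qed
  ultimately show ?thesis
    by (rule Lim_transform_eventually)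
qed

lemma tendsto_gauss_area_at_bot: "(gauss_area \<longlongrightarrow> - (sqrt pi / 2)) at_bot"
proof -
  have "((\<lambda>x. gauss_area (-x)) \<longlongrightarrow> - (sqrt pi / 2)) at_top"
    unfolding gauss_area_minus by (intro tendsto_intros tendsto_gauss_area_at_top)
  then show ?thesis
    unfolding at_bot_mirror tendsto_compose_filtermap[symmetric] by (simp add: o_def)
qed

lemma has_integral_gauss_atMost:
  "((\<lambda>u. exp (-(u^2))) has_integral (sqrt pi / 2 + gauss_area y)) {..y}"
proof (rule nonneg_has_integral_atMost)
  have "((\<lambda>x. sqrt pi / 2 + gauss_area x) \<longlongrightarrow> sqrt pi / 2 + - (sqrt pi / 2))
      at_bot"
    by (intro tendsto_intros tendsto_gauss_area_at_bot)
  then show "((\<lambda>x. sqrt pi / 2 + gauss_area x) \<longlongrightarrow> 0) at_bot"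
    by simp
qed (auto intro!: derivative_eq_intros continuous_intros)

lemma gauss_area_less: "gauss_area x < sqrt pi / 2"
proof -
  have "gauss_area x < gauss_area (x + 1)"
    by (rule DERIV_pos_imp_increasing[of x "x + 1"])
       (auto intro: has_real_derivative_gauss_area)
  also have "gauss_area (x + 1) \<le> sqrt pi / 2"
  proof (rule tendsto_lowerbound[OF tendsto_gauss_area_at_top])
    show "\<forall>\<^sub>F t in at_top. gauss_area (x + 1) \<le> gauss_area t"
      by (rule eventually_mono[OF eventually_ge_at_top[of "x + 1"]],
          rule DERIV_nonneg_imp_nondecreasing) (auto intro: has_real_derivative_gauss_area)
  qed simp
  finally show ?thesis .
qed

definition gauss_tail :: "real \<Rightarrow> real" where
  "gauss_tail x = sqrt pi / 2 - gauss_area x"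

lemma has_real_derivative_gauss_tail [derivative_intros]:
  "(gauss_tail has_real_derivative - exp (-(x^2))) (at x within S)"
  unfolding gauss_tail_def [abs_def] by (auto intro!: derivative_eq_intros)

lemma continuous_on_gauss_tail [continuous_intros]: "continuous_on S gauss_tail"
  unfolding gauss_tail_def [abs_def] by (intro continuous_intros)

lemma gauss_tail_pos: "0 < gauss_tail x"
  using gauss_area_less by (simp add: gauss_tail_def)

lemma tendsto_gauss_tail_at_top: "(gauss_tail \<longlongrightarrow> 0) at_top"
  using tendsto_diff[OF tendsto_const tendsto_gauss_area_at_top, of "sqrt pi / 2"]
  by (simp add: gauss_tail_def [abs_def])

lemma gauss_tail_le:
  assumes "0 < x" shows "gauss_tail x \<le> exp (-(x^2)) / (2 * x)"
proof -
  define G where "G t = exp (-(t^2)) / (2 * t) - gauss_tail t" for t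
  have "G t \<le> G x" if "x \<le> t" for t
  proof (rule DERIV_nonpos_imp_nonincreasing[OF that])
    fix s assume "x \<le> s"
    with assms have "(G has_real_derivative - exp (-(s^2)) / (2 * s^2)) (at s)"
      unfolding G_def [abs_def]
      by (auto intro!: derivative_eq_intros simp: field_simps power2_eq_square)
    then show "\<exists>y. (G has_real_derivative y) (at s) \<and> y \<le> 0"
      by (auto simp: divide_nonneg_pos)
  qed
  moreover have "(G \<longlongrightarrow> 0 - 0) at_top"
    unfolding G_def [abs_def] by (intro tendsto_intros tendsto_gauss_tail_at_top) real_asymp
  ultimately have "0 - 0 \<le> G x"
    by (intro tendsto_upperbound) (auto intro: eventually_mono[OF eventually_ge_at_top[of x]])
  then show ?thesis by (simp add: G_def)
qed

lemma expsq_mult_gauss_tail_le: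
  assumes "0 \<le> x" shows "exp (x^2) * gauss_tail x \<le> sqrt pi / 2"
proof -
  have "exp (x^2) * gauss_tail x \<le> exp (0^2) * gauss_tail 0"
  proof (rule DERIV_nonpos_imp_nonincreasing[OF assms])
    fix t :: real assume "0 \<le> t"
    have "2 * t * exp (t^2) * gauss_tail t \<le> 1"
    proof (cases "t = 0")
      case False
      with \<open>0 \<le> t\<close> have "2 * t * exp (t^2) * gauss_tail t
          \<le> 2 * t * exp (t^2) * (exp (-(t^2)) / (2 * t))"
        by (intro mult_left_mono gauss_tail_le) auto
      also have "\<dots> = 1" using False by (simp add: field_simps exp_minus)
      finally show ?thesis .
    qed simp
    moreover have "((\<lambda>x. exp (x^2) * gauss_tail x)
        has_real_derivative 2 * t * exp (t^2) * gauss_tail t - 1) (at t)"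
      by (auto intro!: derivative_eq_intros simp: algebra_simps mult_exp_exp)
    ultimately show
      "\<exists>y. ((\<lambda>x. exp (x^2) * gauss_tail x) has_real_derivative y) (at t) \<and> y \<le> 0"
      by auto
  qed
  then show ?thesis by (simp add: gauss_tail_def)
qed

lemma has_real_derivative_phi1 [derivative_intros]:
  "(phi1 has_real_derivative exp (x^2)) (at x within S)"
  unfolding phi1_def [abs_def] by (intro has_real_derivative_oint continuous_intros)

lemma continuous_on_phi1 [continuous_intros]:
  "continuous_on S f \<Longrightarrow> continuous_on S (\<lambda>x. phi1 (f x))"
  unfolding phi1_def by (intro continuous_on_compose2[OF continuous_on_oint] continuous_intros) auto

lemma phi1_0 [simp]: "phi1 0 = 0"
  by (simp add: phi1_def)

lemma phi1_minus: "phi1 (-x) = - phi1 x"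
  unfolding phi1_def by (rule oint_minus_of_even) (auto intro!: continuous_intros)

lemma phi1_bounds:
  assumes "0 \<le> x" shows "0 \<le> phi1 x" "phi1 x \<le> x * exp (x^2)"
proof -
  have "0 * x \<le> phi1 x \<and> phi1 x \<le> exp (x^2) * x"
    unfolding phi1_def using assms
    by (intro conjI oint_bounds) (auto intro!: continuous_intros power_mono)
  then show "0 \<le> phi1 x" "phi1 x \<le> x * exp (x^2)"
    by (simp_all add: mult.commute)
qed

lemma psi1_eq_expsq_oint: "psi1 = (\<lambda>x. 2 * expsq_oint gauss_area x)"
  by (intro ext) (simp add: psi1_def expsq_oint_def gauss_area_def)

lemma psi1_0 [simp]: "psi1 0 = 0"
  by (simp add: psi1_def)

lemma has_real_derivative_psi1 [derivative_intros]:
  "(psi1 has_real_derivative 2 * (exp (x^2) * gauss_area x)) (at x within S)"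
  unfolding psi1_eq_expsq_oint by (auto intro!: derivative_eq_intros continuous_intros)

lemma continuous_on_psi1 [continuous_intros]: "continuous_on S psi1"
  unfolding psi1_eq_expsq_oint by (intro continuous_intros)

lemma psi1_minus: "psi1 (-x) = psi1 x"
  unfolding psi1_eq_expsq_oint
  by (subst expsq_oint_minus_of_odd) (auto intro: continuous_intros gauss_area_minus)

lemma sqrt_pi_phi1_minus_psi1: "sqrt pi * phi1 x - psi1 x = 2 * expsq_oint gauss_tail x"
proof -
  have "expsq_oint gauss_tail x = (sqrt pi * phi1 x - psi1 x) / 2 - (sqrt pi * phi1 0 - psi1 0) / 2"
    unfolding expsq_oint_def
    by (rule oint_eq_antiderivative_diff)
       (auto intro!: continuous_intros derivative_eq_intros simp: gauss_tail_def field_simps)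
  then show ?thesis by simp
qed

lemma chi_1: "chi 1 z = sqrt pi * phi1 z + psi1 z"
proof -
  have "integral {..y} (\<lambda>u. exp (-(u^2))) = sqrt pi / 2 + gauss_area y" for y
    by (rule integral_unique[OF has_integral_gauss_atMost])
  then have "chi 1 z = 2 * oint 0 z (\<lambda>y. exp (y^2) * (sqrt pi / 2 + gauss_area y))"
    by simp
  also have "oint 0 z (\<lambda>y. exp (y^2) * (sqrt pi / 2 + gauss_area y))
      = (sqrt pi * phi1 z + psi1 z) / 2 - (sqrt pi * phi1 0 + psi1 0) / 2"
    by (rule oint_eq_antiderivative_diff)
       (auto intro!: continuous_intros derivative_eq_intros simp: algebra_simps)
  finally show ?thesis by simp
qed

lemma phi2_eq_expsq_oint: "phi2 x = 2 * expsq_oint (gauss_oint phi1) x"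
  by (simp add: phi2_def expsq_oint_def gauss_oint_def phi1_def)

lemma psi2_eq_expsq_oint: "psi2 x = 2 * expsq_oint (gauss_oint psi1) x"
proof -
  have psi1: "exp (-(u^2)) * psi1 u
      = 2 * (exp (-(u^2)) * oint 0 u (\<lambda>t. exp (t^2) * oint 0 t (\<lambda>u. exp (-(u^2)))))"
    for u
    by (simp add: psi1_def)
  have "exp (t^2) * gauss_oint psi1 t
      = 2 * (exp (t^2) * oint 0 t (\<lambda>u. exp (-(u^2)) *
          oint 0 u (\<lambda>t. exp (t^2) * oint 0 t (\<lambda>u. exp (-(u^2))))))" for t
    unfolding gauss_oint_def by (simp only: psi1 oint_cmult)
  then show ?thesis
    unfolding psi2_def expsq_oint_def by (simp only: oint_cmult mult.assoc)
qed

lemma gauss_oint_phi1_minus: "gauss_oint phi1 (-x) = gauss_oint phi1 x"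
  by (rule gauss_oint_minus_of_odd) (auto intro: continuous_intros phi1_minus)

lemma gauss_oint_psi1_minus: "gauss_oint psi1 (-x) = - gauss_oint psi1 x"
  by (rule gauss_oint_minus_of_even) (auto intro!: continuous_intros psi1_minus)

lemma phi2_minus: "phi2 (-x) = - phi2 x"
  unfolding phi2_eq_expsq_oint
  by (subst expsq_oint_minus_of_even) (auto intro!: continuous_intros gauss_oint_phi1_minus)

lemma psi2_minus: "psi2 (-x) = psi2 x"
  unfolding psi2_eq_expsq_oint
  by (subst expsq_oint_minus_of_odd) (auto intro!: continuous_intros gauss_oint_psi1_minus)

lemma gauss_oint_phi1_bounds:
  assumes "0 \<le> x" shows "0 \<le> gauss_oint phi1 x" "gauss_oint phi1 x \<le> x^2"
proof -
  have bounds: "0 \<le> exp (-(t^2)) * phi1 t \<and> exp (-(t^2)) * phi1 t \<le> x"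
    if "0 \<le> t" "t \<le> x" for t
  proof -
    have "exp (-(t^2)) * phi1 t \<le> exp (-(t^2)) * (t * exp (t^2))"
      using phi1_bounds[OF \<open>0 \<le> t\<close>] by (intro mult_left_mono) auto
    also have "\<dots> = t" by (simp add: exp_minus)
    finally show ?thesis
      using \<open>t \<le> x\<close> phi1_bounds(1)[OF \<open>0 \<le> t\<close>] by simp
  qed
  have "continuous_on UNIV (\<lambda>t. exp (-(t^2)) * phi1 t)"
    by (intro continuous_intros)
  from oint_bounds[OF this assms bounds]
  show "0 \<le> gauss_oint phi1 x" "gauss_oint phi1 x \<le> x^2"
    by (simp_all add: gauss_oint_def power2_eq_square)
qed

lemma expsq_oint_gauss_tail_bounds:
  assumes "0 \<le> x"
  shows "0 \<le> expsq_oint gauss_tail x" "expsq_oint gauss_tail x \<le> sqrt pi / 2 * x"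
proof -
  have bounds: "0 \<le> exp (t^2) * gauss_tail t \<and> exp (t^2) * gauss_tail t \<le> sqrt pi / 2"
    if "0 \<le> t" "t \<le> x" for t
    using expsq_mult_gauss_tail_le[OF that(1)] gauss_tail_pos[of t] by simp
  have "continuous_on UNIV (\<lambda>t. exp (t^2) * gauss_tail t)"
    by (intro continuous_intros)
  from oint_bounds[OF this assms bounds]
  show "0 \<le> expsq_oint gauss_tail x" "expsq_oint gauss_tail x \<le> sqrt pi / 2 * x"
    by (simp_all add: expsq_oint_def)
qed

lemma tendsto_gauss_tail_mult_at_top:
  fixes g :: "real \<Rightarrow> real"
  assumes "\<forall>\<^sub>F v in at_top. 0 \<le> g v \<and> g v \<le> c * v^2"
  shows "((\<lambda>v. gauss_tail v * g v) \<longlongrightarrow> 0) at_top"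
proof (rule tendsto_sandwich[where f="\<lambda>_. 0" and h="\<lambda>v. c * v * exp (-(v^2)) / 2"])
  show "\<forall>\<^sub>F v in at_top. 0 \<le> gauss_tail v * g v"
    using assms by eventually_elim (simp add: less_imp_le[OF gauss_tail_pos])
  show "\<forall>\<^sub>F v in at_top. gauss_tail v * g v \<le> c * v * exp (-(v^2)) / 2"
    using assms eventually_gt_at_top[of 0]
  proof eventually_elim
    case (elim v)
    then have "gauss_tail v * g v \<le> exp (-(v^2)) / (2 * v) * (c * v^2)"
      by (intro mult_mono gauss_tail_le) (auto simp: less_imp_le[OF gauss_tail_pos])
    also have "\<dots> = c * v * exp (-(v^2)) / 2"
      using \<open>0 < v\<close> by (simp add: field_simps power2_eq_square)
    finally show ?case .
  qed
  have "((\<lambda>v::real. v * exp (-(v^2))) \<longlongrightarrow> 0) at_top"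
    by real_asymp
  from tendsto_mult_right_zero[OF this, of "c / 2"]
  show "((\<lambda>v. c * v * exp (-(v^2)) / 2) \<longlongrightarrow> 0) at_top"
    by (simp add: field_simps)
qed simp

lemma exp_neg_sq_mult_gauss_oint_phi1:
  assumes "0 \<le> u"
  shows "exp (-(u^2)) * gauss_oint phi1 u
    = integral {0..1} (\<lambda>s. u * exp (-(u^2 * (1 + s^2))) * phi1 (s * u))"
proof -
  have "((\<lambda>s. u *\<^sub>R (\<lambda>t. exp (-(t^2)) * phi1 t) (s * u)) has_integral
      integral {0 * u..1 * u} (\<lambda>t. exp (-(t^2)) * phi1 t)) {0..1}"
    by (rule has_integral_substitution[where c=0 and d=u])
       (use assms in \<open>auto intro!: derivative_eq_intros continuous_intros
         simp: mult_left_le_one_le\<close>)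
  then have "((\<lambda>s. u * (exp (-((s * u)^2)) * phi1 (s * u))) has_integral gauss_oint phi1 u)
      {0..1}"
    using assms by (simp add: gauss_oint_def oint_of_nonneg)
  from has_integral_mult_right[OF this, of "exp (-(u^2))"]
  have "((\<lambda>s. u * exp (-(u^2 * (1 + s^2))) * phi1 (s * u)) has_integral
      exp (-(u^2)) * gauss_oint phi1 u) {0..1}"
    by (simp add: algebra_simps mult_exp_exp power_mult_distrib)
  then show ?thesis
    by (rule integral_unique[symmetric])
qed

lemma integral_u_exp_phi1_scaled:
  assumes "0 \<le> v"
  shows "integral {0..v} (\<lambda>u. u * exp (-(u^2 * (1 + s^2))) * phi1 (s * u))
    = (s * gauss_area v - exp (-(v^2 * (1 + s^2))) * phi1 (s * v)) / (2 * (1 + s^2))"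
proof -
  have nz: "1 + s^2 \<noteq> 0"
    using zero_le_power2[of s] by linarith
  have "oint 0 v (\<lambda>u. u * exp (-(u^2 * (1 + s^2))) * phi1 (s * u))
    = (s * gauss_area v - exp (-(v^2 * (1 + s^2))) * phi1 (s * v)) / (2 * (1 + s^2))
    - (s * gauss_area 0 - exp (-(0^2 * (1 + s^2))) * phi1 (s * 0)) / (2 * (1 + s^2))"
  proof (rule oint_eq_antiderivative_diff)
    fix u :: real
    have "exp (-(u^2 * (1 + s^2))) * exp ((s * u)^2) = exp (-(u^2))"
      by (simp add: mult_exp_exp algebra_simps power_mult_distrib)
    then have "((\<lambda>v. s * gauss_area v - exp (-(v^2 * (1 + s^2))) * phi1 (s * v))
        has_real_derivative 2 * (1 + s^2) * (u * exp (-(u^2 * (1 + s^2))) * phi1 (s * u))) (at u)"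
      by (auto intro!: derivative_eq_intros has_real_derivative_phi1[THEN DERIV_chain2]
          simp: algebra_simps)
    from DERIV_cdivide[OF this, of "2 * (1 + s^2)"]
    show "((\<lambda>v. (s * gauss_area v - exp (-(v^2 * (1 + s^2))) * phi1 (s * v)) / (2 * (1 + s^2)))
        has_real_derivative u * exp (-(u^2 * (1 + s^2))) * phi1 (s * u)) (at u)"
      using nz by simp
  qed (intro continuous_intros)
  then show ?thesis
    using assms by (simp add: oint_of_nonneg)
qed

lemma integral_log_one_plus_sq: "integral {0..1} (\<lambda>s::real. s / (2 * (1 + s^2))) = ln 2 / 4"
proof -
  have "oint 0 1 (\<lambda>s::real. s / (2 * (1 + s^2))) = ln (1 + 1^2) / 4 - ln (1 + 0^2) / 4"
    by (rule oint_eq_antiderivative_diff)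
       (auto intro!: continuous_intros derivative_eq_intros
         simp: field_simps add_pos_nonneg add_nonneg_eq_0_iff)
  then show ?thesis by (simp add: oint_of_nonneg)
qed

definition damped_phi1_integral :: "real \<Rightarrow> real" where
  "damped_phi1_integral v =
    integral {0..1} (\<lambda>s. exp (-(v^2 * (1 + s^2))) * phi1 (s * v) / (2 * (1 + s^2)))"

text \<open>
  Substitute t = s u in the inner integral and swap the order of integration; the integral
  over u is then elementary.
\<close>

lemma gauss_oint_gauss_oint_phi1:
  assumes "0 \<le> v"
  shows "gauss_oint (gauss_oint phi1) v = ln 2 / 4 * gauss_area v - damped_phi1_integral v"
proof -
  define F where "F u s = u * exp (-(u^2 * (1 + s^2))) * phi1 (s * u)" for u s :: real
  have "continuous_on UNIV (\<lambda>(u, s). F u s)"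
    unfolding F_def case_prod_beta' by (intro continuous_intros)
  then have swap: "integral {0..v} (\<lambda>u. integral {0..1} (F u))
      = integral {0..1} (\<lambda>s. integral {0..v} (\<lambda>u. F u s))"
    using integral_swap_continuous[of 0 0 v 1 F] continuous_on_subset
    by (fastforce simp: cbox_interval)
  have "gauss_oint (gauss_oint phi1) v
      = integral {0..v} (\<lambda>u. exp (-(u^2)) * gauss_oint phi1 u)"
    using assms by (simp add: gauss_oint_def [of "gauss_oint phi1"] oint_of_nonneg)
  also have "\<dots> = integral {0..v} (\<lambda>u. integral {0..1} (F u))"
    by (rule integral_cong) (simp add: exp_neg_sq_mult_gauss_oint_phi1 F_def [abs_def])
  also have "\<dots> = integral {0..1} (\<lambda>s. s / (2 * (1 + s^2)) * gauss_area v
      - exp (-(v^2 * (1 + s^2))) * phi1 (s * v) / (2 * (1 + s^2)))"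
    unfolding swap F_def integral_u_exp_phi1_scaled[OF assms] by (simp add: diff_divide_distrib)
  also have "\<dots> = integral {0..1} (\<lambda>s. s / (2 * (1 + s^2)) * gauss_area v)
      - integral {0..1} (\<lambda>s. exp (-(v^2 * (1 + s^2))) * phi1 (s * v) / (2 * (1 + s^2)))"
    by (rule integral_diff; intro integrable_continuous_real continuous_intros)
       (auto simp: add_nonneg_eq_0_iff)
  finally show ?thesis
    unfolding integral_mult_left integral_log_one_plus_sq damped_phi1_integral_def .
qed

lemma damped_phi1_integral_bounds:
  assumes "0 \<le> v"
  shows "0 \<le> damped_phi1_integral v" "damped_phi1_integral v \<le> v * exp (-(v^2)) / 2"
proof -
  define f where "f s = exp (-(v^2 * (1 + s^2))) * phi1 (s * v) / (2 * (1 + s^2))" for s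
  have pos: "0 < 1 + s^2" for s :: real
    by (simp add: add_pos_nonneg)
  have integrable: "f integrable_on {0..1}"
    unfolding f_def using pos
    by (intro integrable_continuous_real continuous_intros) (auto simp: add_nonneg_eq_0_iff)
  have bounds: "0 \<le> f s \<and> f s \<le> v * exp (-(v^2)) / 2" if "s \<in> {0..1}" for s
  proof -
    have sv: "0 \<le> s * v" "s * v \<le> v"
      using that assms by (auto simp: mult_left_le_one_le)
    have "f s \<le> exp (-(v^2 * (1 + s^2))) * (s * v * exp ((s * v)^2)) / (2 * (1 + s^2))"
      unfolding f_def using phi1_bounds(2)[OF sv(1)] pos[of s]
      by (intro divide_right_mono mult_left_mono) auto
    also have "\<dots> = s * v * exp (-(v^2)) / (2 * (1 + s^2))"
      by (simp add: mult_exp_exp algebra_simps power_mult_distrib)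
    also have "\<dots> \<le> v * exp (-(v^2)) / 2"
      using sv pos[of s] by (intro frac_le mult_right_mono) auto
    finally show ?thesis
      using phi1_bounds(1)[OF sv(1)] pos[of s] by (simp add: f_def)
  qed
  have "integral {0..1} f \<le> integral {0..1} (\<lambda>_::real. v * exp (-(v^2)) / 2)"
    using bounds by (intro integral_le integrable) auto
  moreover have "0 \<le> integral {0..1} f"
    by (rule integral_nonneg[OF integrable]) (use bounds in auto)
  ultimately show
    "0 \<le> damped_phi1_integral v" "damped_phi1_integral v \<le> v * exp (-(v^2)) / 2"
    unfolding damped_phi1_integral_def f_def [symmetric] by simp_all
qed

lemma tendsto_gauss_oint_gauss_oint_phi1:
  "(gauss_oint (gauss_oint phi1) \<longlongrightarrow> sqrt pi * ln 2 / 8) at_top"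
proof -
  have "(damped_phi1_integral \<longlongrightarrow> 0) at_top"
  proof (rule tendsto_sandwich[where f="\<lambda>_. 0" and h="\<lambda>v. v * exp (-(v^2)) / 2"])
    show "\<forall>\<^sub>F v in at_top. 0 \<le> damped_phi1_integral v"
      using eventually_ge_at_top[of 0] by eventually_elim (rule damped_phi1_integral_bounds)
    show "\<forall>\<^sub>F v in at_top. damped_phi1_integral v \<le> v * exp (-(v^2)) / 2"
      using eventually_ge_at_top[of 0] by eventually_elim (rule damped_phi1_integral_bounds)
    show "((\<lambda>v::real. v * exp (-(v^2)) / 2) \<longlongrightarrow> 0) at_top"
      by real_asymp
  qed simp
  then have "((\<lambda>v. ln 2 / 4 * gauss_area v - damped_phi1_integral v)
      \<longlongrightarrow> ln 2 / 4 * (sqrt pi / 2) - 0) at_top"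
    by (intro tendsto_intros tendsto_gauss_area_at_top)
  moreover have "\<forall>\<^sub>F v in at_top.
      ln 2 / 4 * gauss_area v - damped_phi1_integral v = gauss_oint (gauss_oint phi1) v"
    using eventually_ge_at_top[of 0] by eventually_elim (simp add: gauss_oint_gauss_oint_phi1)
  ultimately have
    "(gauss_oint (gauss_oint phi1) \<longlongrightarrow> ln 2 / 4 * (sqrt pi / 2) - 0) at_top"
    by (rule Lim_transform_eventually)
  then show ?thesis
    by (simp add: field_simps)
qed

definition chi1_primitive :: "real \<Rightarrow> real" where
  "chi1_primitive y = sqrt pi * gauss_oint phi1 y + gauss_oint psi1 y"

lemma has_real_derivative_chi1_primitive:
  "(chi1_primitive has_real_derivative exp (-(x^2)) * chi 1 x) (at x)"
  unfolding chi1_primitive_def [abs_def] chi_1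
  by (auto intro!: derivative_eq_intros continuous_intros simp: algebra_simps)

text \<open>
  Here sqrt pi Q - R = 2 gauss_oint (expsq_oint gauss_tail), which is integrated by parts
  against gauss_tail; all terms but the first tend to 0 at infinity.
\<close>

lemma chi1_primitive_minus:
  "chi1_primitive (-v) = 4 * gauss_oint (gauss_oint phi1) v
    + 4 * gauss_tail v * gauss_oint phi1 v + 2 * gauss_tail v * (gauss_tail v * phi1 v)
    - 2 * gauss_tail v * expsq_oint gauss_tail v"
proof -
  define F where "F v = (sqrt pi * gauss_oint phi1 v - gauss_oint psi1 v
    - 4 * gauss_tail v * gauss_oint phi1 v - 2 * gauss_tail v * (gauss_tail v * phi1 v)
    + 2 * gauss_tail v * expsq_oint gauss_tail v) / 4" for v
  have "gauss_oint (gauss_oint phi1) v = F v - F 0"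
    unfolding gauss_oint_def [of "gauss_oint phi1"]
  proof (rule oint_eq_antiderivative_diff)
    fix x
    have psi1: "psi1 x = sqrt pi * phi1 x - 2 * expsq_oint gauss_tail x"
      using sqrt_pi_phi1_minus_psi1[of x] by simp
    show "(F has_real_derivative exp (-(x^2)) * gauss_oint phi1 x) (at x)"
      unfolding F_def [abs_def]
      by (auto intro!: derivative_eq_intros continuous_intros
          simp: psi1 algebra_simps mult_exp_exp)
  qed (intro continuous_intros)
  then show ?thesis
    by (simp add: F_def chi1_primitive_def gauss_oint_phi1_minus gauss_oint_psi1_minus
        algebra_simps)
qed

lemma tendsto_chi1_primitive_at_bot: "(chi1_primitive \<longlongrightarrow> sqrt pi * ln 2 / 2) at_bot"
proof -
  have phi1:
    "\<forall>\<^sub>F v in at_top. 0 \<le> gauss_oint phi1 v \<and> gauss_oint phi1 v \<le> 1 * v^2"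
    using eventually_ge_at_top[of 0] by eventually_elim (simp add: gauss_oint_phi1_bounds)
  have tail_phi1: "\<forall>\<^sub>F v in at_top.
      0 \<le> gauss_tail v * phi1 v \<and> gauss_tail v * phi1 v \<le> 1 / 2 * v^2"
    using eventually_ge_at_top[of 1]
  proof eventually_elim
    case (elim v)
    then have "gauss_tail v * phi1 v \<le> exp (-(v^2)) / (2 * v) * (v * exp (v^2))"
      using phi1_bounds[of v]
      by (intro mult_mono gauss_tail_le) (auto simp: less_imp_le[OF gauss_tail_pos])
    also have "\<dots> = 1 / 2"
      using elim by (simp add: field_simps exp_minus)
    also have "\<dots> \<le> 1 / 2 * v^2"
      using elim by (simp add: one_le_power)
    finally show ?case
      using elim phi1_bounds[of v] by (simp add: less_imp_le[OF gauss_tail_pos])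
  qed
  have tail_int: "\<forall>\<^sub>F v in at_top.
      0 \<le> expsq_oint gauss_tail v \<and> expsq_oint gauss_tail v \<le> sqrt pi / 2 * v^2"
    using eventually_ge_at_top[of 1]
  proof eventually_elim
    case (elim v)
    then have "sqrt pi / 2 * v \<le> sqrt pi / 2 * v^2"
      by (intro mult_left_mono) (auto simp: power2_eq_square)
    then show ?case
      using elim expsq_oint_gauss_tail_bounds[of v] by linarith
  qed
  have "((\<lambda>v. 4 * gauss_oint (gauss_oint phi1) v + 4 * (gauss_tail v * gauss_oint phi1 v)
      + 2 * (gauss_tail v * (gauss_tail v * phi1 v)) - 2 * (gauss_tail v * expsq_oint gauss_tail v))
      \<longlongrightarrow> 4 * (sqrt pi * ln 2 / 8) + 4 * 0 + 2 * 0 - 2 * 0) at_top"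
    by (intro tendsto_intros tendsto_gauss_oint_gauss_oint_phi1
        tendsto_gauss_tail_mult_at_top[OF phi1] tendsto_gauss_tail_mult_at_top[OF tail_phi1]
        tendsto_gauss_tail_mult_at_top[OF tail_int])
  then have "((\<lambda>v. chi1_primitive (-v)) \<longlongrightarrow> sqrt pi * ln 2 / 2) at_top"
    by (simp add: chi1_primitive_minus algebra_simps)
  then show ?thesis
    unfolding at_bot_mirror tendsto_compose_filtermap[symmetric] by (simp add: o_def)
qed

lemma chi_1_nonpos: "x \<le> 0 \<Longrightarrow> chi 1 x \<le> 0"
  using sqrt_pi_phi1_minus_psi1[of "-x"] expsq_oint_gauss_tail_bounds(1)[of "-x"]
  unfolding chi_1 by (simp add: phi1_minus psi1_minus)

lemma has_integral_chi_1_atMost: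
  "((\<lambda>u. exp (-(u^2)) * chi 1 u) has_integral (chi1_primitive y - sqrt pi * ln 2 / 2)) {..y}"
proof -
  define a where "a = min y 0"
  have "((\<lambda>u. - (exp (-(u^2)) * chi 1 u)) has_integral (sqrt pi * ln 2 / 2 - chi1_primitive a))
      {..a}"
  proof (rule nonneg_has_integral_atMost)
    show "((\<lambda>u. sqrt pi * ln 2 / 2 - chi1_primitive u) \<longlongrightarrow> 0) at_bot"
      using tendsto_diff[OF tendsto_const tendsto_chi1_primitive_at_bot, of "sqrt pi * ln 2 / 2"]
      by simp
    show "\<And>x. x < a \<Longrightarrow> 0 \<le> - (exp (-(x^2)) * chi 1 x)"
      using chi_1_nonpos by (simp add: a_def mult_nonneg_nonpos)
    show "continuous_on UNIV (\<lambda>u. - (exp (-(u^2)) * chi 1 u))"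
      unfolding chi_1 by (intro continuous_intros)
  qed (auto intro!: derivative_eq_intros has_real_derivative_chi1_primitive)
  from has_integral_neg[OF this]
  have "((\<lambda>u. exp (-(u^2)) * chi 1 u) has_integral (chi1_primitive a - sqrt pi * ln 2 / 2))
      {..a}"
    by simp
  from has_integral_atMost_extend[OF this has_real_derivative_chi1_primitive, of y]
  show ?thesis
    by (simp add: a_def)
qed

lemma chi_2: "chi 2 z = sqrt pi * (phi2 z - ln 2 * phi1 z) + psi2 z"
proof -
  have "chi 2 z
      = 2 * oint 0 z (\<lambda>y. exp (y^2) * integral {..y} (\<lambda>u. exp (-(u^2)) * chi 1 u))"
    using chi.simps(2)[of 1] by (simp only: Suc_1)
  also have "(\<lambda>y. integral {..y} (\<lambda>u. exp (-(u^2)) * chi 1 u))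
      = (\<lambda>y. chi1_primitive y - sqrt pi * ln 2 / 2)"
    using has_integral_chi_1_atMost by (auto intro: integral_unique)
  also have "oint 0 z (\<lambda>y. exp (y^2) * (chi1_primitive y - sqrt pi * ln 2 / 2))
    = (sqrt pi * expsq_oint (gauss_oint phi1) z + expsq_oint (gauss_oint psi1) z
        - sqrt pi * ln 2 / 2 * phi1 z)
    - (sqrt pi * expsq_oint (gauss_oint phi1) 0 + expsq_oint (gauss_oint psi1) 0
        - sqrt pi * ln 2 / 2 * phi1 0)"
    unfolding chi1_primitive_def
    by (rule oint_eq_antiderivative_diff)
       (auto intro!: derivative_eq_intros continuous_intros simp: algebra_simps)
  finally show ?thesis
    by (simp add: phi2_eq_expsq_oint psi2_eq_expsq_oint algebra_simps)
qed

theorem lemma2: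
  shows "(\<forall>z. chi 1 z = sqrt pi * phi1 z + psi1 z)
       \<and> (\<forall>z. chi 2 z = sqrt pi * (phi2 z - ln 2 * phi1 z) + psi2 z)
       \<and> (\<forall>x. phi1 (-x) = - phi1 x) \<and> (\<forall>x. phi2 (-x) = - phi2 x)
       \<and> (\<forall>x. psi1 (-x) = psi1 x) \<and> (\<forall>x. psi2 (-x) = psi2 x)"
  using chi_1 chi_2 phi1_minus phi2_minus psi1_minus psi2_minus by blast

end
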